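(* In the FIND setting of the context, fix a leaf cluster $\mathcal C_r$ and a consistent ordering of $\mathcal T_r^+$. If $\mathcal C_i$ is a child of $\mathcal C_k$ in $\mathcal T_r^+$, then $\boldsymbol\Sigma_k(\mathcal B_i,\mathcal B_i)=\boldsymbol\Sigma_{i+}(\mathcal B_i,\mathcal B_i)$.
   Context: Setting (FIND). $\mathcal M$ is a finite set of mesh nodes; $\mathbf A$ is an invertible complex matrix indexed by $\mathcal M\times\mathcal M$, structurally symmetric ($A_{ij}\neq0\iff A_{ji}\neq0$); distinct nodes $i,j$ are connected if $A_{ij}\neq 0$. $\boldsymbol\Sigma$ is a complex matrix indexed by $\mathcal M\times\mathcal M$ with $\Sigma_{ij}=0$ whenever $i\neq j$ and $i,j$ are not connected. $\dagger$ is conjugate transpose, $\mathbf X^{-\dagger}=(\mathbf X^{-1})^\dagger$. $\mathbf X(X,Y)$ is the submatrix with rows in $X$, columns in $Y$. For a cluster $\mathcal C\subseteq\mathcal M$: boundary set $\mathcal B_{\mathcal C}=\{i\in\mathcal C: A_{ij}\neq 0\text{ for some } j\notin\mathcal C\}$, inner set $\mathcal I_{\mathcal C}=\mathcal C\setminus\mathcal B_{\mathcal C}$; for $\mathcal C_g$ write $\mathcal B_g,\mathcal I_g$. Cluster tree: $\mathcal T$ is a rooted binary tree of clusters with root $\mathcal M$, each non-leaf cluster the disjoint union of its two children. For a leaf $\mathcal C_r$ with path $r=a_0,\dots,a_d$ (root) and $b_k$ the sibling of $a_k$, the augmented tree $\mathcal T_r^+$ has root $\mathcal C_{-r}=\mathcal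 M\setminus\mathcal C_r$; for $0\le k\le d-2$, $\mathcal C_{-a_k}=\mathcal M\setminus\mathcal C_{a_k}$ has children $\mathcal C_{b_k}$ and $\mathcal C_{-a_{k+1}}$, with $\mathcal C_{-a_{d-1}}$ identified with $\mathcal C_{b_{d-1}}$; each basic cluster $\mathcal C_{b_k}$ carries its subtree from $\mathcal T$. Private inner nodes: $\mathcal S_g=\mathcal I_g$ for a leaf $g$ of $\mathcal T_r^+$; $\mathcal S_g=\mathcal I_g\setminus(\mathcal I_i\cup\mathcal I_j)$ if $g$ has children $i,j$. Consistent ordering: a total order $g_1,\dots,g_m$ of the nodes of $\mathcal T_r^+$ with every node after all its descendants. Elimination: $\mathbf A_{g_1}=\mathbf A$, $\boldsymbol\Sigma_{g_1}=\boldsymbol\Sigma$; for each $g$ (with $\mathbf A_g(\mathcal S_g,\mathcal S_g)$ invertible), $\mathcal L_g=\mathbf A_g(\mathcal B_g,\mathcal S_g)\mathbf A_g(\mathcal S_g,\mathcal S_g)^{-1}$, $\mathbf L_g$ is the identity on $\mathcal M$ except $\mathbf L_g(\mathcal B_g,\mathcal S_g)=\mathcal L_g$, $\mathbf A_{g+}=\mathbf L_g^{-1}\mathbf A_g$, $\boldsymbol\Sigma_{g+}=\mathbf L_g^{-1}\boldsymbol\Sigma_g\mathbf L_g^{-\dagger}$, and $\mathbf A_{g_{t+1}}=\mathbf A_{g_t+}$, $\boldsymbol\Sigma_{g_{t+1}}=\boldsymbol\Sigma_{g_t+}$. Thus $\boldsymbol\Sigma_k$ is the matrix just before, and $\boldsymbol\Sigma_{k+}$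 just after, eliminating $\mathcal S_k$. *)

theory Defs
  imports "HOL-Analysis.Analysis"
begin

text \<open>Mesh nodes: the finite type 'n (so the mesh is UNIV). Matrices: complex^'n^'n.\<close>

datatype 'a ctree = Leaf "'a set" | Node "'a ctree" "'a ctree"

fun cl :: "'a ctree \<Rightarrow> 'a set" where
  "cl (Leaf C) = C"
| "cl (Node l r) = cl l \<union> cl r"

fun wf_ctree :: "'a ctree \<Rightarrow> bool" where
  "wf_ctree (Leaf C) = True"
| "wf_ctree (Node l r) = (cl l \<inter> cl r = {} \<and> wf_ctree l \<and> wf_ctree r)"

text \<open>Nodes of a tree are addressed by positions (paths from the root; False = left, True = right).\<close>
fun subtree_at :: "'a ctree \<Rightarrow> bool list \<Rightarrow> 'a ctree option" where
  "subtree_at t [] = Some t"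
| "subtree_at (Node l r) (b # p) = subtree_at (if b then r else l) p"
| "subtree_at (Leaf C) (b # p) = None"

definition positions :: "'a ctree \<Rightarrow> bool list set" where
  "positions t = {p. subtree_at t p \<noteq> None}"

definition cl_at :: "'a ctree \<Rightarrow> bool list \<Rightarrow> 'a set" where
  "cl_at t p = cl (the (subtree_at t p))"

text \<open>Augmented tree T_r^+ for the leaf at path p. aug_go walks down the path from a_k,
 with acc the tree of C_{-a_k}; the new complement C_{-a_{k+1}}' has children (sibling, acc).\<close>
fun aug_go :: "'a ctree \<Rightarrow> bool list \<Rightarrow> 'a ctree \<Rightarrow> 'a ctree" where
  "aug_go (Node l r) (b # p) acc = aug_go (if b then r else l) p (Node (if b then l else r) acc)"
| "aug_go t p acc = acc"

fun aug_tree :: "'a ctree \<Rightarrow> bool list \<Rightarrow> 'a ctree" where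
  "aug_tree (Node l r) (b # p) = aug_go (if b then r else l) p (if b then l else r)"
| "aug_tree t p = t"

text \<open>Boundary and inner sets w.r.t. the (original) matrix A.\<close>
definition boundary :: "complex^'n^'n \<Rightarrow> 'n set \<Rightarrow> 'n set" where
  "boundary A C = {i \<in> C. \<exists>j. j \<notin> C \<and> A $ i $ j \<noteq> 0}"

definition inner :: "complex^'n^'n \<Rightarrow> 'n set \<Rightarrow> 'n set" where
  "inner A C = C - boundary A C"

definition private_set :: "complex^'n^'n \<Rightarrow> 'n ctree \<Rightarrow> bool list \<Rightarrow> 'n set" where
  "private_set A t p = (case subtree_at t p of
      Some (Leaf C) \<Rightarrow> inner A C
    | Some (Node l r) \<Rightarrow> inner A (cl (Node l r)) - (inner A (cl l) \<union> inner A (cl r))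
    | None \<Rightarrow> {})"

text \<open>Inverse of the submatrix X(S,S) (entries outside S x S are irrelevant).\<close>
definition is_block_inv :: "complex^'n^'n \<Rightarrow> 'n set \<Rightarrow> complex^'n^'n \<Rightarrow> bool" where
  "is_block_inv X S Y \<longleftrightarrow>
     (\<forall>i\<in>S. \<forall>j\<in>S. (\<Sum>k\<in>S. Y $ i $ k * X $ k $ j) = (if i = j then 1 else 0)) \<and>
     (\<forall>i\<in>S. \<forall>j\<in>S. (\<Sum>k\<in>S. X $ i $ k * Y $ k $ j) = (if i = j then 1 else 0))"

definition block_invertible :: "complex^'n^'n \<Rightarrow> 'n set \<Rightarrow> bool" where
  "block_invertible X S \<longleftrightarrow> (\<exists>Y. is_block_inv X S Y)"

definition block_inv :: "complex^'n^'n \<Rightarrow> 'n set \<Rightarrow> complex^'n^'n" where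
  "block_inv X S = (SOME Y. is_block_inv X S Y)"

definition cadj :: "complex^'n^'n \<Rightarrow> complex^'n^'n" where
  "cadj X = (\<chi> i j. cnj (X $ j $ i))"

definition elim_L :: "complex^'n^'n \<Rightarrow> 'n ctree \<Rightarrow> bool list \<Rightarrow> complex^'n^'n \<Rightarrow> complex^'n^'n" where
  "elim_L A t p X = (let B = boundary A (cl_at t p); S = private_set A t p in
     (\<chi> x y. if x \<in> B \<and> y \<in> S then (\<Sum>k\<in>S. X $ x $ k * block_inv X S $ k $ y)
             else (if x = y then 1 else 0)))"

definition elim_step :: "complex^'n^'n \<Rightarrow> 'n ctree \<Rightarrow> bool list
     \<Rightarrow> (complex^'n^'n) \<times> (complex^'n^'n) \<Rightarrow> (complex^'n^'n) \<times> (complex^'n^'n)" where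
  "elim_step A t p st = (let L = elim_L A t p (fst st); Li = matrix_inv L in
     (Li ** fst st, Li ** snd st ** cadj Li))"

text \<open>State (A_{g_{k+1}}, Sigma_{g_{k+1}}) after eliminating the first k nodes of the ordering.\<close>
definition elim_state :: "complex^'n^'n \<Rightarrow> complex^'n^'n \<Rightarrow> 'n ctree \<Rightarrow> bool list list
     \<Rightarrow> nat \<Rightarrow> (complex^'n^'n) \<times> (complex^'n^'n)" where
  "elim_state A Sig t ord k = fold (elim_step A t) (take k ord) (A, Sig)"

definition consistent_ordering :: "'a ctree \<Rightarrow> bool list list \<Rightarrow> bool" where
  "consistent_ordering t ord \<longleftrightarrow> distinct ord \<and> set ord = positions t \<and>
     (\<forall>i<length ord. \<forall>j<length ord. (\<exists>q. q \<noteq> [] \<and> ord ! j = ord ! i @ q) \<longrightarrow> j < i)"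

end

theory Submission
  imports Defs
begin

text \<open>Since
\<open>B\<^sub>g \<inter> S\<^sub>g = {}\<close>, \<open>L\<^sub>g = I + N\<close> with \<open>N\<^sup>2 = 0\<close>, so \<open>L\<^sub>g\<^sup>-\<^sup>1 = I - N\<close> differs from the
identity only in the rows \<open>B\<^sub>g\<close>: the step leaves every entry \<open>(x, y)\<close> with \<open>x, y \<notin> B\<^sub>g\<close>
unchanged. In a consistent ordering, the nodes eliminated strictly between a child \<open>C\<^sub>i\<close>
and its parent \<open>C\<^sub>k\<close> are neither ancestors nor descendants of \<open>C\<^sub>i\<close>, so their
clusters, and hence their boundaries, are disjoint from \<open>C\<^sub>i \<supseteq> B\<^sub>i\<close>.\<close>

lemma matrix_add_rdistrib: "(B + C) ** (A::'a::semiring_1^'n^'m) = B ** A + C ** A"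
  by (simp add: matrix_matrix_mult_def vec_eq_iff sum.distrib distrib_right)

lemma matrix_diff_ldistrib: "(A::'a::ring_1^'n^'m) ** (B - C) = A ** B - A ** C"
  by (simp add: matrix_matrix_mult_def vec_eq_iff sum_subtractf right_diff_distrib)

lemma matrix_diff_rdistrib: "(B - C) ** (A::'a::ring_1^'n^'m) = B ** A - C ** A"
  by (simp add: matrix_matrix_mult_def vec_eq_iff sum_subtractf left_diff_distrib)

lemma matrix_inv_one_plus_nilpotent:
  fixes N :: "'a::ring_1^'n^'n"
  assumes "N ** N = 0"
  shows "matrix_inv (mat 1 + N) = mat 1 - N"
proof -
  have right: "(mat 1 + N) ** (mat 1 - N) = mat 1"
    using assms by (simp add: matrix_add_rdistrib matrix_diff_ldistrib)
  have left: "(mat 1 - N) ** (mat 1 + N) = mat 1"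
    using assms by (simp add: matrix_add_ldistrib matrix_diff_rdistrib)
  have inv: "(mat 1 + N) ** matrix_inv (mat 1 + N) = mat 1 \<and> matrix_inv (mat 1 + N) ** (mat 1 + N) = mat 1"
    unfolding matrix_inv_def using right left by (rule someI[where x = "mat 1 - N", OF conjI])
  then have "matrix_inv (mat 1 + N) = matrix_inv (mat 1 + N) ** ((mat 1 + N) ** (mat 1 - N))"
    using right by simp
  also have "\<dots> = mat 1 - N"
    using inv by (simp add: matrix_mul_assoc)
  finally show ?thesis .
qed

definition block_matrix :: "'n set \<Rightarrow> 'n set \<Rightarrow> ('n \<Rightarrow> 'n \<Rightarrow> 'a::zero) \<Rightarrow> 'a^'n^'n" where
  "block_matrix B S e = (\<chi> x y. if x \<in> B \<and> y \<in> S then e x y else 0)"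

lemma block_matrix_square_zero:
  fixes e :: "'n::finite \<Rightarrow> 'n \<Rightarrow> 'a::semiring_1"
  assumes "B \<inter> S = {}"
  shows "block_matrix B S e ** block_matrix B S e = 0"
  using assms by (auto simp: block_matrix_def matrix_matrix_mult_def vec_eq_iff intro!: sum.neutral)

lemma row_one_minus_block_matrix:
  fixes e :: "'n::finite \<Rightarrow> 'n \<Rightarrow> 'a::ring_1"
  shows "x \<notin> B \<Longrightarrow> (mat 1 - block_matrix B S e) $ x $ z = (if z = x then 1 else 0)"
  by (simp add: block_matrix_def mat_def)

lemma congruence_entry_unit_rows:
  fixes M X :: "complex^'n^'n"
  assumes "\<And>z. M $ x $ z = (if z = x then 1 else 0)" and "\<And>z. M $ y $ z = (if z = y then 1 else 0)"
  shows "(M ** X ** cadj M) $ x $ y = X $ x $ y"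
proof -
  have "(M ** X ** cadj M) $ x $ y = (\<Sum>k\<in>UNIV. (M ** X) $ x $ k * cnj (M $ y $ k))"
    by (simp only: matrix_matrix_mult_def[of "M ** X"] cadj_def vec_lambda_beta)
  also have "\<dots> = (M ** X) $ x $ y"
    by (simp add: assms(2) if_distrib cong: if_cong)
  also have "\<dots> = (\<Sum>k\<in>UNIV. M $ x $ k * X $ k $ y)"
    by (simp only: matrix_matrix_mult_def vec_lambda_beta)
  also have "\<dots> = (\<Sum>k\<in>UNIV. if k = x then X $ x $ y else 0)"
    by (rule sum.cong) (simp_all add: assms(1))
  also have "\<dots> = X $ x $ y"
    by simp
  finally show ?thesis .
qed

lemma boundary_inter_private_set: "boundary A (cl_at t p) \<inter> private_set A t p = {}"
  by (auto simp: private_set_def cl_at_def inner_def split: option.splits ctree.splits)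

lemma elim_L_eq_one_plus_block_matrix:
  "elim_L A t p X = mat 1 + block_matrix (boundary A (cl_at t p)) (private_set A t p)
     (\<lambda>x y. \<Sum>k\<in>private_set A t p. X $ x $ k * block_inv X (private_set A t p) $ k $ y)"
  using boundary_inter_private_set[of A t p]
  by (auto simp: elim_L_def block_matrix_def mat_def Let_def vec_eq_iff)

lemma elim_step_snd_outside_boundary:
  assumes "x \<notin> boundary A (cl_at t p)" and "y \<notin> boundary A (cl_at t p)"
  shows "snd (elim_step A t p st) $ x $ y = snd st $ x $ y"
proof -
  define N where "N = block_matrix (boundary A (cl_at t p)) (private_set A t p)
     (\<lambda>x y. \<Sum>k\<in>private_set A t p. fst st $ x $ k * block_inv (fst st) (private_set A t p) $ k $ y)"
  have L: "elim_L A t p (fst st) = mat 1 + N"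
    unfolding N_def by (rule elim_L_eq_one_plus_block_matrix)
  have "N ** N = 0"
    unfolding N_def by (rule block_matrix_square_zero[OF boundary_inter_private_set])
  then have "snd (elim_step A t p st) = (mat 1 - N) ** snd st ** cadj (mat 1 - N)"
    by (simp add: elim_step_def L matrix_inv_one_plus_nilpotent Let_def)
  also have "(\<dots>) $ x $ y = snd st $ x $ y"
    unfolding N_def using assms by (intro congruence_entry_unit_rows row_one_minus_block_matrix)
  finally show ?thesis .
qed

lemma fold_elim_step_snd_outside_boundaries:
  assumes "\<forall>g\<in>set gs. x \<notin> boundary A (cl_at t g) \<and> y \<notin> boundary A (cl_at t g)"
  shows "snd (fold (elim_step A t) gs st) $ x $ y = snd st $ x $ y"
  using assms by (induction gs arbitrary: st) (simp_all add: elim_step_snd_outside_boundary)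

lemma elim_state_snd_outside_boundaries:
  assumes "m \<le> n"
    and "\<And>j. m \<le> j \<Longrightarrow> j < n \<Longrightarrow> j < length ord \<Longrightarrow>
           x \<notin> boundary A (cl_at t (ord ! j)) \<and> y \<notin> boundary A (cl_at t (ord ! j))"
  shows "snd (elim_state A Sig t ord n) $ x $ y = snd (elim_state A Sig t ord m) $ x $ y"
proof -
  define gs where "gs = drop m (take n ord)"
  have take_n: "take n ord = take m ord @ gs"
    unfolding gs_def using assms(1) by (metis append_take_drop_id min.absorb1 take_take)
  have "\<forall>g\<in>set gs. x \<notin> boundary A (cl_at t g) \<and> y \<notin> boundary A (cl_at t g)"
  proof
    fix g assume "g \<in> set gs"
    then obtain l where l: "l < length (drop m (take n ord))" and "g = drop m (take n ord) ! l"
      by (auto simp: in_set_conv_nth gs_def)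
    moreover have "m \<le> length (take n ord)"
      using l by (simp add: min_def split: if_splits)
    ultimately have "g = ord ! (m + l)" and "m + l < n" and "m + l < length ord"
      by simp_all
    then show "x \<notin> boundary A (cl_at t g) \<and> y \<notin> boundary A (cl_at t g)"
      using assms(2)[of "m + l"] by simp
  qed
  then show ?thesis
    unfolding elim_state_def take_n fold_append comp_def
    by (rule fold_elim_step_snd_outside_boundaries)
qed

lemma cl_subtree_at_subset: "subtree_at t p = Some u \<Longrightarrow> cl u \<subseteq> cl t"
proof (induction t arbitrary: p)
  case (Leaf C) then show ?case by (cases p) auto
next
  case (Node l r) then show ?case by (cases p) (auto split: if_splits)
qed

lemma cl_subtree_at_disjoint:
  assumes "wf_ctree t" and "subtree_at t p = Some u" and "subtree_at t q = Some v"
    and "\<nexists>r. q = p @ r" and "\<nexists>r. p = q @ r"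
  shows "cl u \<inter> cl v = {}"
  using assms
proof (induction t arbitrary: p q)
  case (Leaf C) then show ?case by (cases p; cases q) auto
next
  case (Node l r)
  then obtain b p' c q' where p: "p = b # p'" and q: "q = c # q'"
    by (cases p; cases q) auto
  show ?case
  proof (cases "b = c")
    case True
    then show ?thesis using Node p q by (cases b) auto
  next
    case False
    then show ?thesis using Node.prems p q
      cl_subtree_at_subset[of l p' u] cl_subtree_at_subset[of r p' u]
      cl_subtree_at_subset[of l q' v] cl_subtree_at_subset[of r q' v]
      by (cases b; cases c) auto
  qed
qed

lemma cl_at_disjoint:
  assumes "wf_ctree t" and "p \<in> positions t" and "q \<in> positions t"
    and "\<nexists>r. q = p @ r" and "\<nexists>r. p = q @ r"
  shows "cl_at t p \<inter> cl_at t q = {}"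
  using assms cl_subtree_at_disjoint[of t p _ q] by (auto simp: positions_def cl_at_def)

lemma wf_aug_go: "wf_ctree t \<Longrightarrow> wf_ctree acc \<Longrightarrow> cl t \<inter> cl acc = {} \<Longrightarrow> wf_ctree (aug_go t p acc)"
  by (induction t p acc rule: aug_go.induct) (auto, blast+)

lemma wf_aug_tree: "wf_ctree t \<Longrightarrow> wf_ctree (aug_tree t p)"
  by (induction t p rule: aug_tree.induct) (auto intro!: wf_aug_go)

lemma consistent_ordering_descendant_before:
  assumes "consistent_ordering t ord" and "i < length ord" and "j < length ord"
    and "ord ! j = ord ! i @ q" and "j \<noteq> i"
  shows "j < i"
proof -
  have "q \<noteq> []"
    using assms nth_eq_iff_index_eq by (fastforce simp: consistent_ordering_def)
  then show ?thesis
    using assms unfolding consistent_ordering_def by blast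
qed

lemma consistent_ordering_between_child_and_parent:
  assumes co: "consistent_ordering t ord" and "k < length ord" and child: "ord ! i = ord ! k @ [b]"
    and "i < j" and "j < k"
  shows "\<nexists>r. ord ! j = ord ! i @ r" and "\<nexists>r. ord ! i = ord ! j @ r"
proof -
  have len: "i < length ord" "j < length ord"
    using assms by simp_all
  show "\<nexists>r. ord ! j = ord ! i @ r"
    using consistent_ordering_descendant_before[OF co len] \<open>i < j\<close> by fastforce
  show "\<nexists>r. ord ! i = ord ! j @ r"
  proof
    assume "\<exists>r. ord ! i = ord ! j @ r"
    then obtain r where r: "ord ! i = ord ! j @ r" ..
    have "r \<noteq> []"
      using r \<open>i < j\<close> len co nth_eq_iff_index_eq by (fastforce simp: consistent_ordering_def)
    then have "ord ! i = (ord ! j @ butlast r) @ [last r]"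
      using r by simp
    then have k_below_j: "ord ! k = ord ! j @ butlast r"
      using child by simp
    show False
      using consistent_ordering_descendant_before[OF co len(2) \<open>k < length ord\<close> k_below_j]
        \<open>j < k\<close> by simp
  qed
qed


theorem corollary2:
  fixes A Sig :: "complex^'n^'n" and T Tp :: "'n ctree" and rp :: "bool list"
    and Cr :: "'n set" and ord :: "bool list list" and k i :: nat and b :: bool
  assumes "invertible A"
    and "\<forall>x y. A $ x $ y \<noteq> 0 \<longleftrightarrow> A $ y $ x \<noteq> 0"
    and "\<forall>x y. x \<noteq> y \<and> A $ x $ y = 0 \<longrightarrow> Sig $ x $ y = 0"
    and "wf_ctree T" and "cl T = UNIV"
    and "subtree_at T rp = Some (Leaf Cr)" and "rp \<noteq> []"
    and "Tp = aug_tree T rp"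
    and "consistent_ordering Tp ord"
    and "\<forall>t<length ord. block_invertible (fst (elim_state A Sig Tp ord t)) (private_set A Tp (ord ! t))"
    and "k < length ord" and "i < length ord" and "ord ! i = ord ! k @ [b]"
  shows "\<forall>x\<in>boundary A (cl_at Tp (ord ! i)). \<forall>y\<in>boundary A (cl_at Tp (ord ! i)).
           snd (elim_state A Sig Tp ord k) $ x $ y = snd (elim_state A Sig Tp ord (Suc i)) $ x $ y"
proof (intro ballI)
  fix x y
  assume x: "x \<in> boundary A (cl_at Tp (ord ! i))" and y: "y \<in> boundary A (cl_at Tp (ord ! i))"
  have wf: "wf_ctree Tp"
    using assms(4,8) by (simp add: wf_aug_tree)
  have pos: "set ord = positions Tp"
    using assms(9) by (simp add: consistent_ordering_def)
  have "i \<noteq> k"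
    using assms(13) by auto
  then have "i < k"
    by (rule consistent_ordering_descendant_before[OF assms(9,11,12,13)])
  moreover have "x \<notin> boundary A (cl_at Tp (ord ! j)) \<and> y \<notin> boundary A (cl_at Tp (ord ! j))"
    if "Suc i \<le> j" and "j < k" for j
  proof -
    have "ord ! i \<in> positions Tp" and "ord ! j \<in> positions Tp"
      using pos assms(11,12) \<open>j < k\<close> by (metis nth_mem order.strict_trans)+
    moreover have "\<nexists>r. ord ! j = ord ! i @ r" and "\<nexists>r. ord ! i = ord ! j @ r"
      using consistent_ordering_between_child_and_parent[OF assms(9,11,13)] that
      by (simp_all add: Suc_le_eq)
    ultimately have "cl_at Tp (ord ! i) \<inter> cl_at Tp (ord ! j) = {}"
      by (rule cl_at_disjoint[OF wf])
    then show ?thesis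
      using x y by (auto simp: boundary_def)
  qed
  ultimately show "snd (elim_state A Sig Tp ord k) $ x $ y = snd (elim_state A Sig Tp ord (Suc i)) $ x $ y"
    by (intro elim_state_snd_outside_boundaries) simp_all
qed

end
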